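(* Let $q$ be a power series negligible to double factorial. Then the families $\big(\int_0^tq(e^{bs}x+w(s)+\widetilde W_s)ds\big)_{t\le T,x\in\mathbb{R}}$ and $\big(q(e^{bt}x+w(t)+\widetilde W_t)\big)_{t\le T,x\in\mathbb{R}}$ are estimable, and there exist a power series $\tilde q$ negligible to double factorial, depending only on $T$ and $q$, and a constant $C$ such that for all $t\in[0,T]$, $x\in\mathbb{R}$, \[ \mathbb{E}\Big[\Big|\int_0^tq(e^{bs}x+w(s)+\widetilde W_s)ds\Big|\Big]+\mathbb{E}\big[|q(e^{bt}x+w(t)+\widetilde W_t)|\big]\le|\tilde q|(|x|)+C. \]
   Context: Let $W$ be a Brownian motion, $a,b\in\mathbb{R}$, $c\ne0$, $T>0$. Set $w(t)=a\int_0^te^{b(t-s)}ds$, $\widetilde W_t=c\int_0^te^{b(t-s)}dW_s$, $\widetilde W^*_T=\sup_{s\le T}|\widetilde W_s|$. For a power series $q$, $|q|(x):=\sum_k|q_k|x^k$. A power series is negligible to double factorial if $\limsup_k(|q_k|(k-1)!!)^{1/k}=0$, $(-1)!!=0!!=1$. A family of processes $(M_t(x))_{t\le T,x\in\mathbb{R}}$ is estimable if there is a power series $r$ negligible to double factorial such that for all fixed $t\in[0,T]$, $x\in\mathbb{R}$, $|M_t(x)|\le|r|(|x|)+|r|(\widetilde W^*_T)$ a.s. *)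

theory Defs
  imports "HOL-Probability.Probability"
begin

text \<open>Since natural subtraction gives 0 - 1 = 0 and 0!! = 1, the term dfact (k - 1)
  equals the paper's (k-1)!! for all k, including the convention (-1)!! = 1.\<close>
fun dfact :: "nat \<Rightarrow> real" where
  "dfact 0 = 1"
| "dfact (Suc 0) = 1"
| "dfact (Suc (Suc n)) = real (Suc (Suc n)) * dfact n"

definition ps_eval :: "(nat \<Rightarrow> real) \<Rightarrow> real \<Rightarrow> real" where
  "ps_eval q x = (\<Sum>k. q k * x ^ k)"

definition ps_abs :: "(nat \<Rightarrow> real) \<Rightarrow> real \<Rightarrow> real" where
  "ps_abs q x = (\<Sum>k. \<bar>q k\<bar> * x ^ k)"

definition negligible_df :: "(nat \<Rightarrow> real) \<Rightarrow> bool" where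
  "negligible_df q \<longleftrightarrow> limsup (\<lambda>k. ereal (root k (\<bar>q k\<bar> * dfact (k - 1)))) = 0"

definition brownian_motion :: "'a measure \<Rightarrow> (real \<Rightarrow> 'a \<Rightarrow> real) \<Rightarrow> bool" where
  "brownian_motion M W \<longleftrightarrow>
     prob_space M \<and>
     (\<forall>t. W t \<in> borel_measurable M) \<and>
     (\<forall>\<omega>\<in>space M. W 0 \<omega> = 0 \<and> continuous_on {0..} (\<lambda>t. W t \<omega>)) \<and>
     (\<forall>s t. 0 \<le> s \<and> s < t \<longrightarrow>
        distributed M lborel (\<lambda>\<omega>. W t \<omega> - W s \<omega>)
          (\<lambda>y. ennreal (normal_density 0 (sqrt (t - s)) y))) \<and>
     (\<forall>(ts :: nat \<Rightarrow> real) n. (\<forall>i<n. 0 \<le> ts i \<and> ts i < ts (Suc i)) \<longrightarrow>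
        prob_space.indep_vars M (\<lambda>_. borel) (\<lambda>i \<omega>. W (ts (Suc i)) \<omega> - W (ts i) \<omega>) {..<n})"

definition wdet :: "real \<Rightarrow> real \<Rightarrow> real \<Rightarrow> real" where
  "wdet a b t = a * (LBINT s=0..t. exp (b * (t - s)))"

text \<open>The Wiener integral tilde W_t = c * int_0^t e^{b(t-s)} dW_s, with deterministic
  C^1 integrand, given pathwise via integration by parts:
  int_0^t e^{b(t-s)} dW_s = W_t + b * int_0^t e^{b(t-s)} W_s ds.\<close>
definition Wtil :: "real \<Rightarrow> real \<Rightarrow> (real \<Rightarrow> 'a \<Rightarrow> real) \<Rightarrow> real \<Rightarrow> 'a \<Rightarrow> real" where
  "Wtil c b W t \<omega> = c * (W t \<omega> + b * (LBINT s=0..t. exp (b * (t - s)) * W s \<omega>))"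

definition Wtil_star :: "real \<Rightarrow> real \<Rightarrow> (real \<Rightarrow> 'a \<Rightarrow> real) \<Rightarrow> real \<Rightarrow> 'a \<Rightarrow> real" where
  "Wtil_star c b W T \<omega> = (SUP s\<in>{0..T}. \<bar>Wtil c b W s \<omega>\<bar>)"

definition estimable :: "'a measure \<Rightarrow> real \<Rightarrow> real \<Rightarrow> (real \<Rightarrow> 'a \<Rightarrow> real) \<Rightarrow> real
     \<Rightarrow> (real \<Rightarrow> real \<Rightarrow> 'a \<Rightarrow> real) \<Rightarrow> bool" where
  "estimable M c b W T F \<longleftrightarrow>
     (\<exists>r. negligible_df r \<and>
        (\<forall>t\<in>{0..T}. \<forall>x. AE \<omega> in M.
           \<bar>F t x \<omega>\<bar> \<le> ps_abs r \<bar>x\<bar> + ps_abs r (Wtil_star c b W T \<omega>)))"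

end

theory Submission
  imports Defs
begin

(* Since |q(y)| <= |q|(|y|) and |q| is increasing, only the size of y_s = e^{bs} x + w(s) + W~_s
   matters: it is at most e^{|b|T} |x| + |a| T e^{|b|T} + |W~_s|, and |q|(u + v) <= |q|(2u) + |q|(2v)
   separates the initial value from the noise. Bounding |W~_s| by W~*_T gives estimability with a
   dilated copy of q. For the expectations, the integration-by-parts formula for W~ bounds |W~_s| by
   |c| |W_s| + |c| |b| e^{|b|T} int_0^T |W_u| du. The Gaussian absolute moments
   E |W_s|^k <= s^{k/2} (k-1)!!, together with Jensen's inequality for the time integral, bound
   E |q|(L |W_s|) and E |q|(L int_0^T |W_u| du) by series sum_k |q_k| R^k (k-1)!!, which converge
   precisely because q is negligible to double factorial. *)

section \<open>Power series negligible to double factorial\<close>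

lemma dfact_ge_1: "1 \<le> dfact n"
  by (induction n rule: dfact.induct) (auto intro: order_trans[OF _ mult_right_mono[of 1]])

lemma dfact_pos [simp]: "0 < dfact n"
  using dfact_ge_1[of n] by linarith

lemma dfact_nonneg [simp]: "0 \<le> dfact n"
  using dfact_pos[of n] by linarith

lemma negligible_dfD:
  assumes "negligible_df q" "0 < \<epsilon>"
  shows "\<forall>\<^sub>F k in sequentially. root k (\<bar>q k\<bar> * dfact (k - 1)) < \<epsilon>"
proof -
  have "limsup (\<lambda>k. ereal (root k (\<bar>q k\<bar> * dfact (k - 1)))) < ereal \<epsilon>"
    using assms unfolding negligible_df_def by simp
  from Limsup_lessD[OF this] show ?thesis by simp
qed

lemma negligible_df_summable:
  assumes "negligible_df q" "0 \<le> R"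
  shows "summable (\<lambda>k. \<bar>q k\<bar> * R ^ k * dfact (k - 1))"
proof (rule summable_comparison_test_ev[OF _ summable_geometric[of "1/2"]])
  define \<epsilon> where "\<epsilon> = 1 / (2 * (R + 1))"
  have "0 < \<epsilon>" "\<epsilon> * R \<le> 1/2"
    using assms(2) by (simp_all add: \<epsilon>_def field_simps)
  show "\<forall>\<^sub>F k in sequentially. norm (\<bar>q k\<bar> * R ^ k * dfact (k - 1)) \<le> (1/2) ^ k"
    using eventually_conj[OF negligible_dfD[OF assms(1) \<open>0 < \<epsilon>\<close>] eventually_gt_at_top[of 0]]
  proof eventually_elim
    case (elim k)
    have nonneg: "0 \<le> \<bar>q k\<bar> * dfact (k - 1)" by simp
    have "\<bar>q k\<bar> * dfact (k - 1) = root k (\<bar>q k\<bar> * dfact (k - 1)) ^ k"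
      using elim nonneg by (simp add: real_root_pow_pos2)
    also have "\<dots> \<le> \<epsilon> ^ k"
      using elim nonneg by (intro power_mono) (auto simp: real_root_ge_zero)
    finally have "\<bar>q k\<bar> * dfact (k - 1) * R ^ k \<le> (\<epsilon> * R) ^ k"
      using assms(2) by (simp add: power_mult_distrib mult_right_mono)
    also have "\<dots> \<le> (1/2) ^ k"
      using \<open>0 < \<epsilon>\<close> \<open>\<epsilon> * R \<le> 1/2\<close> assms(2) by (intro power_mono) auto
    finally show ?case
      using assms(2) by (simp add: abs_mult mult_ac)
  qed
qed (simp add: summable_geometric)

lemma negligible_df_summable_abs:
  assumes "negligible_df q" "0 \<le> R"
  shows "summable (\<lambda>k. \<bar>q k\<bar> * R ^ k)"
proof (rule summable_comparison_test[OF _ negligible_df_summable[OF assms]])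
  have "\<bar>q k\<bar> * R ^ k * 1 \<le> \<bar>q k\<bar> * R ^ k * dfact (k - 1)" for k
    using assms(2) dfact_ge_1 by (intro mult_left_mono) auto
  then show "\<exists>N. \<forall>k\<ge>N. norm (\<bar>q k\<bar> * R ^ k) \<le> \<bar>q k\<bar> * R ^ k * dfact (k - 1)"
    using assms(2) by (auto simp: abs_mult)
qed

lemma ps_abs_nonneg:
  assumes "negligible_df q" "0 \<le> y"
  shows "0 \<le> ps_abs q y"
  unfolding ps_abs_def using negligible_df_summable_abs[OF assms] assms(2)
  by (intro suminf_nonneg) auto

lemma ps_abs_mono:
  assumes "negligible_df q" "0 \<le> y" "y \<le> z"
  shows "ps_abs q y \<le> ps_abs q z"
  unfolding ps_abs_def using assms
  by (intro suminf_le negligible_df_summable_abs[OF assms(1)])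
     (auto intro!: mult_left_mono power_mono)

lemma abs_ps_eval_le:
  assumes "negligible_df q"
  shows "\<bar>ps_eval q y\<bar> \<le> ps_abs q \<bar>y\<bar>"
proof -
  have "summable (\<lambda>k. norm (q k * y ^ k))"
    using negligible_df_summable_abs[OF assms, of "\<bar>y\<bar>"] by (simp add: abs_mult power_abs)
  then show ?thesis
    unfolding ps_eval_def ps_abs_def
    using summable_norm by (fastforce simp: abs_mult power_abs)
qed

lemma ps_abs_add_le:
  assumes q: "negligible_df q" and "0 \<le> y" "0 \<le> z"
  shows "ps_abs q (y + z) \<le> ps_abs q (2 * y) + ps_abs q (2 * z)"
proof -
  have "(y + z) ^ k \<le> (2 * y) ^ k + (2 * z) ^ k" for k
  proof -
    have "(y + z) ^ k \<le> (2 * max y z) ^ k"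
      using assms by (intro power_mono) auto
    also have "\<dots> \<le> (2 * y) ^ k + (2 * z) ^ k"
      using assms by (cases "y \<le> z") (auto simp: max_def)
    finally show ?thesis .
  qed
  then have "ps_abs q (y + z) \<le> (\<Sum>k. \<bar>q k\<bar> * (2 * y) ^ k + \<bar>q k\<bar> * (2 * z) ^ k)"
    unfolding ps_abs_def using assms
    by (intro suminf_le summable_add negligible_df_summable_abs[OF q])
       (auto simp flip: distrib_left intro!: mult_left_mono)
  also have "\<dots> = ps_abs q (2 * y) + ps_abs q (2 * z)"
    unfolding ps_abs_def using assms
    by (intro suminf_add[symmetric] negligible_df_summable_abs[OF q]) auto
  finally show ?thesis .
qed

lemma ennreal_ps_abs:
  assumes "negligible_df q" "0 \<le> y"
  shows "ennreal (ps_abs q y) = (\<Sum>k. ennreal (\<bar>q k\<bar> * y ^ k))"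
  unfolding ps_abs_def using assms negligible_df_summable_abs[OF assms]
  by (intro suminf_ennreal2[symmetric]) auto

lemma ps_abs_borel [measurable]: "ps_abs q \<in> borel_measurable borel"
  unfolding ps_abs_def[abs_def] by measurable

lemma negligible_df_eventually_eq:
  assumes "negligible_df q" "\<forall>\<^sub>F k in sequentially. \<bar>r k\<bar> = \<bar>q k\<bar>"
  shows "negligible_df r"
  using assms(1) unfolding negligible_df_def
  by (subst Limsup_eq[OF eventually_mono[OF assms(2)]]) auto

lemma negligible_df_scale:
  assumes "negligible_df q" "0 < C" "0 < L"
  shows "negligible_df (\<lambda>k. C * L ^ k * q k)"
proof -
  let ?u = "\<lambda>k. ereal (root k C * L)" and ?v = "\<lambda>k. ereal (root k (\<bar>q k\<bar> * dfact (k - 1)))"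
  have "\<forall>\<^sub>F k in sequentially.
      ereal (root k (\<bar>C * L ^ k * q k\<bar> * dfact (k - 1))) = ?u k * ?v k"
    using eventually_gt_at_top[of 0]
    by eventually_elim (use assms in \<open>simp add: abs_mult real_root_mult real_root_power_cancel\<close>)
  then have "limsup (\<lambda>k. ereal (root k (\<bar>C * L ^ k * q k\<bar> * dfact (k - 1))))
      = limsup (\<lambda>k. ?u k * ?v k)"
    by (rule Limsup_eq)
  also have "\<dots> = ereal L * limsup ?v"
    using assms tendsto_mult[OF LIMSEQ_root_const[of C] tendsto_const[of L]]
    by (intro ereal_limsup_lim_mult) (auto intro!: tendsto_ereal)
  finally show ?thesis
    using assms(1) by (simp add: negligible_df_def)
qed

definition ps_rescale :: "real \<Rightarrow> real \<Rightarrow> real \<Rightarrow> (nat \<Rightarrow> real) \<Rightarrow> nat \<Rightarrow> real" where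
  "ps_rescale C L D q k = C * L ^ k * \<bar>q k\<bar> + (if k = 0 then D else 0)"

lemma negligible_df_ps_rescale:
  assumes "negligible_df q" "0 < C" "0 < L"
  shows "negligible_df (ps_rescale C L D q)"
proof (rule negligible_df_eventually_eq)
  show "negligible_df (\<lambda>k. C * L ^ k * \<bar>q k\<bar>)"
    using assms(1) by (intro negligible_df_scale assms(2,3)) (simp add: negligible_df_def)
  show "\<forall>\<^sub>F k in sequentially. \<bar>ps_rescale C L D q k\<bar> = \<bar>C * L ^ k * \<bar>q k\<bar>\<bar>"
    using eventually_gt_at_top[of 0] by eventually_elim (simp add: ps_rescale_def)
qed

lemma ps_abs_ps_rescale:
  assumes q: "negligible_df q" and "0 \<le> C" "0 \<le> L" "0 \<le> D" "0 \<le> y"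
  shows "ps_abs (ps_rescale C L D q) y = C * ps_abs q (L * y) + D"
proof -
  have sums: "summable (\<lambda>k. \<bar>q k\<bar> * (L * y) ^ k)" "summable (\<lambda>k. if k = 0 then D else 0)"
    using assms by (auto intro: negligible_df_summable_abs[OF q] summable_finite[of "{0}"])
  have const: "(\<Sum>k. if k = 0 then D else 0) = D"
    by (subst suminf_finite[of "{0}"]) auto
  have "ps_abs (ps_rescale C L D q) y = (\<Sum>k. C * (\<bar>q k\<bar> * (L * y) ^ k) + (if k = 0 then D else 0))"
    unfolding ps_abs_def ps_rescale_def using assms
    by (intro suminf_cong) (auto simp: abs_mult power_mult_distrib)
  also have "\<dots> = C * ps_abs q (L * y) + D"
    unfolding ps_abs_def using sums
    by (subst suminf_add[symmetric]) (auto simp: suminf_mult summable_mult const)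
  finally show ?thesis .
qed

section \<open>Gaussian moments and time integrals\<close>

lemma fact_Suc_eq_dfact: "fact (Suc n) = dfact (Suc n) * dfact n"
  by (induction n) (simp_all del: fact_Suc add: fact_Suc[of "Suc n" for n])

lemma dfact_double: "dfact (2 * j) = 2 ^ j * fact j"
  by (induction j) (auto simp: numeral_eq_Suc algebra_simps)

lemma normal_abs_moment_le:
  assumes "0 < \<sigma>"
  shows "(\<integral>x. normal_density 0 \<sigma> x * \<bar>x\<bar> ^ k \<partial>lborel) \<le> \<sigma> ^ k * dfact (k - 1)"
proof (cases "even k")
  case True
  then obtain j where k: "k = 2 * j" by auto
  have "(\<integral>x. normal_density 0 \<sigma> x * \<bar>x\<bar> ^ k \<partial>lborel) = fact (2 * j) / ((2 / \<sigma>\<^sup>2) ^ j * fact j)"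
    using integral_normal_moment_even[OF assms, of 0 j] k by (simp add: power_even_abs)
  also have "\<dots> = \<sigma> ^ k * dfact (k - 1)"
  proof (cases j)
    case (Suc i)
    then have "fact (2 * j) = 2 ^ j * fact j * dfact (k - 1)"
      using fact_Suc_eq_dfact[of "2 * j - 1"] k by (simp add: dfact_double)
    moreover have "(2 / \<sigma>\<^sup>2) ^ j = 2 ^ j / \<sigma> ^ k"
      using k by (simp add: power_divide power_mult)
    ultimately show ?thesis
      using assms by simp
  qed (use k in simp)
  finally show ?thesis by simp
next
  case False
  then obtain j where k: "k = 2 * j + 1" using oddE by blast
  have "(\<integral>x. normal_density 0 \<sigma> x * \<bar>x\<bar> ^ k \<partial>lborel) = \<sigma> ^ k * dfact (k - 1) * sqrt (2 / pi)"
    using integral_normal_moment_abs_odd[OF assms, of 0 j] dfact_double[of j] k by (simp add: mult_ac)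
  also have "\<dots> \<le> \<sigma> ^ k * dfact (k - 1)"
    using assms pi_ge_two by (intro mult_left_le) (auto simp: real_sqrt_le_1_iff)
  finally show ?thesis .
qed

lemma nn_integral_abs_power_normal_le:
  assumes "distributed M lborel X (\<lambda>y. ennreal (normal_density 0 \<sigma> y))" "0 < \<sigma>"
  shows "(\<integral>\<^sup>+\<omega>. ennreal (\<bar>X \<omega>\<bar> ^ k) \<partial>M) \<le> ennreal (\<sigma> ^ k * dfact (k - 1))"
proof -
  have "(\<integral>\<^sup>+\<omega>. ennreal (\<bar>X \<omega>\<bar> ^ k) \<partial>M)
      = (\<integral>\<^sup>+y. ennreal (normal_density 0 \<sigma> y * \<bar>y\<bar> ^ k) \<partial>lborel)"
    by (subst distributed_nn_integral[OF assms(1), symmetric]) (auto simp: ennreal_mult')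
  also have "\<dots> = ennreal (\<integral>y. normal_density 0 \<sigma> y * \<bar>y\<bar> ^ k \<partial>lborel)"
    using integrable_normal_moment_abs[OF assms(2), of 0 k]
    by (intro nn_integral_eq_integral) auto
  also have "\<dots> \<le> ennreal (\<sigma> ^ k * dfact (k - 1))"
    by (intro ennreal_leI normal_abs_moment_le assms(2))
  finally show ?thesis .
qed

lemma ps_abs_dfact_nonneg:
  assumes "negligible_df q" "0 \<le> y"
  shows "0 \<le> ps_abs (\<lambda>k. dfact (k - 1) * q k) y"
  unfolding ps_abs_def using negligible_df_summable[OF assms] assms(2)
  by (intro suminf_nonneg) (auto simp: abs_mult mult_ac)

lemma nn_integral_ps_abs_le:
  assumes q: "negligible_df q" and "X \<in> borel_measurable M" "\<And>\<omega>. \<omega> \<in> space M \<Longrightarrow> 0 \<le> X \<omega>"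
    and "0 \<le> \<sigma>" and moments: "\<And>k. (\<integral>\<^sup>+\<omega>. ennreal (X \<omega> ^ k) \<partial>M) \<le> ennreal (\<sigma> ^ k * dfact (k - 1))"
  shows "(\<integral>\<^sup>+\<omega>. ennreal (ps_abs q (X \<omega>)) \<partial>M) \<le> ennreal (ps_abs (\<lambda>k. dfact (k - 1) * q k) \<sigma>)"
proof -
  have "(\<integral>\<^sup>+\<omega>. ennreal (ps_abs q (X \<omega>)) \<partial>M)
      = (\<integral>\<^sup>+\<omega>. (\<Sum>k. ennreal \<bar>q k\<bar> * ennreal (X \<omega> ^ k)) \<partial>M)"
    using assms by (intro nn_integral_cong) (simp add: ennreal_ps_abs ennreal_mult)
  also have "\<dots> = (\<Sum>k. ennreal \<bar>q k\<bar> * (\<integral>\<^sup>+\<omega>. ennreal (X \<omega> ^ k) \<partial>M))"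
    using assms(2) by (simp add: nn_integral_suminf nn_integral_cmult)
  also have "\<dots> \<le> (\<Sum>k. ennreal \<bar>q k\<bar> * ennreal (\<sigma> ^ k * dfact (k - 1)))"
    by (intro suminf_le summableI mult_left_mono moments) auto
  also have "\<dots> = (\<Sum>k. ennreal (\<bar>dfact (k - 1) * q k\<bar> * \<sigma> ^ k))"
    using assms(4) by (simp add: ennreal_mult[symmetric] abs_mult mult_ac)
  also have "\<dots> = ennreal (ps_abs (\<lambda>k. dfact (k - 1) * q k) \<sigma>)"
    unfolding ps_abs_def using negligible_df_summable[OF q assms(4)] assms(4)
    by (intro suminf_ennreal2) (auto simp: abs_mult mult_ac)
  finally show ?thesis .
qed

lemma abs_LBINT_le_nn_integral:
  fixes f :: "real \<Rightarrow> real"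
  assumes "0 \<le> t"
  shows "ennreal \<bar>LBINT s=0..t. f s\<bar> \<le> (\<integral>\<^sup>+s\<in>{0<..<t}. ennreal \<bar>f s\<bar> \<partial>lborel)"
proof -
  have "einterval 0 (ereal t) = {0<..<t}"
    using einterval_eq_Icc[of 0 t] by (simp add: zero_ereal_def)
  then have eq: "(LBINT s=0..t. f s) = (LBINT s. indicator {0<..<t} s *\<^sub>R f s)"
    using assms by (simp add: interval_lebesgue_integral_le_eq set_lebesgue_integral_def)
  have norm_eq: "(\<integral>\<^sup>+s. ennreal \<bar>indicator {0<..<t} s *\<^sub>R f s\<bar> \<partial>lborel)
      = (\<integral>\<^sup>+s\<in>{0<..<t}. ennreal \<bar>f s\<bar> \<partial>lborel)"
    by (intro nn_integral_cong) (auto simp: indicator_def)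
  show ?thesis
  proof (cases "integrable lborel (\<lambda>s. indicator {0<..<t} s *\<^sub>R f s)")
    case True
    then show ?thesis
      using integral_norm_bound_ennreal[OF True] by (simp only: eq norm_eq real_norm_def)
  next
    case False
    then show ?thesis by (simp add: eq not_integrable_integral_eq)
  qed
qed

lemma abs_LBINT_le:
  fixes f :: "real \<Rightarrow> real"
  assumes "0 \<le> t" "0 \<le> B" "\<And>s. 0 < s \<Longrightarrow> s < t \<Longrightarrow> \<bar>f s\<bar> \<le> B"
  shows "\<bar>LBINT s=0..t. f s\<bar> \<le> t * B"
proof -
  have "ennreal \<bar>LBINT s=0..t. f s\<bar> \<le> (\<integral>\<^sup>+s\<in>{0<..<t}. ennreal \<bar>f s\<bar> \<partial>lborel)"
    by (rule abs_LBINT_le_nn_integral[OF assms(1)])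
  also have "\<dots> \<le> (\<integral>\<^sup>+s. ennreal B * indicator {0<..<t} s \<partial>lborel)"
    using assms by (intro nn_integral_mono) (auto simp: indicator_def)
  also have "\<dots> = ennreal (t * B)"
    using assms by (simp add: nn_integral_cmult_indicator ennreal_mult' mult.commute)
  finally show ?thesis
    using assms by (simp add: ennreal_le_iff)
qed

lemma power_tangent_le:
  fixes h m :: real
  assumes "0 \<le> h" "0 \<le> m"
  shows "m ^ k + real k * m ^ (k - 1) * (h - m) \<le> h ^ k"
proof (cases "m = 0 \<or> k = 0")
  case True
  then show ?thesis
    using assms by (cases k) (auto simp: power_0_left)
next
  case False
  then have "0 < m" "0 < k" using assms by auto
  have "1 + real k * ((h - m) / m) \<le> (1 + (h - m) / m) ^ k"
    using \<open>0 < m\<close> assms by (intro Bernoulli_inequality) (simp add: field_simps)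
  then have "m ^ k * (1 + real k * ((h - m) / m)) \<le> m ^ k * (h / m) ^ k"
    using \<open>0 < m\<close> by (intro mult_left_mono) (simp_all add: field_simps)
  moreover have "m ^ k * (1 + real k * ((h - m) / m)) = m ^ k + real k * m ^ (k - 1) * (h - m)"
  proof -
    have "m ^ k = m ^ (k - 1) * m"
      using \<open>0 < k\<close> by (cases k) auto
    then show ?thesis
      using \<open>0 < m\<close> by (simp add: field_simps)
  qed
  moreover have "m ^ k * (h / m) ^ k = h ^ k"
    using \<open>0 < m\<close> by (simp add: power_divide)
  ultimately show ?thesis
    by simp
qed

text \<open>Jensen for \<open>x ^ k\<close> on \<open>A\<close>: integrating the tangent line of \<open>x ^ k\<close> at the mean
  \<open>m = I / T\<close>, the linear terms cancel.\<close>

lemma power_set_nn_integral_le: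
  fixes f :: "'b \<Rightarrow> real"
  assumes A: "A \<in> sets N" "emeasure N A = ennreal T" "0 < T"
    and f: "f \<in> borel_measurable N" "\<And>x. 0 \<le> f x"
    and I: "(\<integral>\<^sup>+x\<in>A. ennreal (f x) \<partial>N) = ennreal I" "0 \<le> I"
  shows "ennreal (T * I ^ k) \<le> ennreal (T ^ k) * (\<integral>\<^sup>+x\<in>A. ennreal (f x ^ k) \<partial>N)"
proof -
  define m where "m = I / T"
  define slope where "slope = real k * m ^ (k - 1)"
  have "0 \<le> m" "0 \<le> slope"
    using A I by (simp_all add: m_def slope_def)
  have cancel: "slope * I = real k * m ^ k * T"
    using A by (cases k) (simp_all add: slope_def m_def field_simps)
  have "(\<integral>\<^sup>+x\<in>A. ennreal (m ^ k) + ennreal slope * ennreal (f x) \<partial>N)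
      \<le> (\<integral>\<^sup>+x\<in>A. ennreal (f x ^ k) + ennreal (real k * m ^ k) \<partial>N)"
  proof (intro nn_integral_mono mult_right_mono)
    fix x
    have "m ^ k + slope * f x \<le> f x ^ k + real k * m ^ k"
      using power_tangent_le[OF f(2) \<open>0 \<le> m\<close>, of k] \<open>0 \<le> m\<close>
      by (cases k) (simp_all add: slope_def algebra_simps)
    then show "ennreal (m ^ k) + ennreal slope * ennreal (f x) \<le> ennreal (f x ^ k) + ennreal (real k * m ^ k)"
      using \<open>0 \<le> m\<close> \<open>0 \<le> slope\<close> f(2) by (simp flip: ennreal_plus ennreal_mult)
  qed simp
  then have "ennreal (m ^ k * T) + ennreal (slope * I)
      \<le> (\<integral>\<^sup>+x\<in>A. ennreal (f x ^ k) \<partial>N) + ennreal (real k * m ^ k * T)"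
    using A f I \<open>0 \<le> m\<close> \<open>0 \<le> slope\<close>
    by (simp add: distrib_right nn_integral_add nn_integral_cmult nn_integral_cmult_indicator
        ennreal_mult mult.assoc)
  then have "ennreal (m ^ k * T) \<le> (\<integral>\<^sup>+x\<in>A. ennreal (f x ^ k) \<partial>N)"
    by (simp add: cancel add.commute ennreal_add_left_cancel_le)
  then have "ennreal (T ^ k) * ennreal (m ^ k * T) \<le> ennreal (T ^ k) * (\<integral>\<^sup>+x\<in>A. ennreal (f x ^ k) \<partial>N)"
    by (rule mult_left_mono) simp
  moreover have "T * I ^ k = T ^ k * (m ^ k * T)"
    using A by (simp add: m_def power_divide)
  ultimately show ?thesis
    using A \<open>0 \<le> m\<close> by (simp add: ennreal_mult mult_ac)
qed

lemma floor_grid_tendsto: "(\<lambda>n. real_of_int \<lfloor>real (Suc n) * t\<rfloor> / real (Suc n)) \<longlonglongrightarrow> t"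
proof (rule tendsto_sandwich[of "\<lambda>n. t - 1 / real (Suc n)" _ _ "\<lambda>n. t"])
  have "t - 1 / real (Suc n) \<le> real_of_int \<lfloor>real (Suc n) * t\<rfloor> / real (Suc n)" for n
  proof -
    have "t - 1 / real (Suc n) = (real (Suc n) * t - 1) / real (Suc n)"
      by (simp add: field_simps)
    also have "\<dots> \<le> real_of_int \<lfloor>real (Suc n) * t\<rfloor> / real (Suc n)"
      by (intro divide_right_mono) linarith+
    finally show ?thesis .
  qed
  then show "\<forall>\<^sub>F n in sequentially. t - 1 / real (Suc n) \<le> real_of_int \<lfloor>real (Suc n) * t\<rfloor> / real (Suc n)"
    by simp
  show "\<forall>\<^sub>F n in sequentially. real_of_int \<lfloor>real (Suc n) * t\<rfloor> / real (Suc n) \<le> t"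
    by (intro always_eventually allI) (simp add: field_simps)
  show "(\<lambda>n. t - 1 / real (Suc n)) \<longlonglongrightarrow> t"
    using tendsto_diff[OF tendsto_const[of t] LIMSEQ_inverse_real_of_nat] by (simp add: inverse_eq_divide)
qed simp

lemma borel_measurable_continuous_paths:
  fixes X :: "real \<Rightarrow> 'a \<Rightarrow> real"
  assumes meas: "\<And>t. X t \<in> borel_measurable M"
    and cont: "\<And>\<omega>. \<omega> \<in> space M \<Longrightarrow> continuous_on UNIV (\<lambda>t. X t \<omega>)"
  shows "(\<lambda>(\<omega>, t). X t \<omega>) \<in> borel_measurable (M \<Otimes>\<^sub>M borel)"
proof (rule borel_measurable_LIMSEQ_real)
  define grid where "grid n t = real_of_int \<lfloor>real (Suc n) * t\<rfloor> / real (Suc n)" for n t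
  show "(\<lambda>p. X (grid n (snd p)) (fst p)) \<in> borel_measurable (M \<Otimes>\<^sub>M borel)" for n
  proof -
    have "(\<lambda>p. real (Suc n) * snd p) \<in> borel_measurable (M \<Otimes>\<^sub>M borel)"
      by simp
    then have "(\<lambda>p. \<lfloor>real (Suc n) * snd p\<rfloor>) \<in> M \<Otimes>\<^sub>M borel \<rightarrow>\<^sub>M count_space UNIV"
      using measurable_compose[OF _ measurable_real_floor] by (simp add: o_def)
    then show ?thesis
      unfolding grid_def
      by (rule measurable_compose_countable'[where I=UNIV, OF measurable_compose[OF measurable_fst meas]])
         simp_all
  qed
  fix p :: "'a \<times> real" assume "p \<in> space (M \<Otimes>\<^sub>M borel)"
  then have "fst p \<in> space M" by (auto simp: space_pair_measure)
  have "(\<lambda>n. grid n t) \<longlonglongrightarrow> t" for t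
    unfolding grid_def by (rule floor_grid_tendsto)
  then show "(\<lambda>n. X (grid n (snd p)) (fst p)) \<longlonglongrightarrow> (case p of (\<omega>, t) \<Rightarrow> X t \<omega>)"
    using cont[OF \<open>fst p \<in> space M\<close>] by (auto intro: continuous_on_tendsto_compose split: prod.split)
qed

lemma exp_le_exp_abs_mult:
  fixes b s T :: real
  assumes "0 \<le> s" "s \<le> T"
  shows "exp (b * s) \<le> exp (\<bar>b\<bar> * T)"
proof -
  have "b * s \<le> \<bar>b\<bar> * s"
    using assms by (intro mult_right_mono) auto
  also have "\<dots> \<le> \<bar>b\<bar> * T"
    using assms by (intro mult_left_mono) auto
  finally show ?thesis by simp
qed

lemma abs_wdet_le:
  assumes "0 \<le> s" "s \<le> T"
  shows "\<bar>wdet a b s\<bar> \<le> \<bar>a\<bar> * T * exp (\<bar>b\<bar> * T)"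
proof -
  have "\<bar>LBINT u=0..s. exp (b * (s - u))\<bar> \<le> s * exp (\<bar>b\<bar> * T)"
    using assms exp_le_exp_abs_mult[of "s - u" T b for u] by (intro abs_LBINT_le) auto
  also have "\<dots> \<le> T * exp (\<bar>b\<bar> * T)"
    using assms by (intro mult_right_mono) auto
  finally show ?thesis
    unfolding wdet_def abs_mult mult.assoc by (intro mult_left_mono) auto
qed

section \<open>Brownian motion on a finite horizon\<close>

locale brownian_motion_horizon =
  fixes M :: "'a measure" and W :: "real \<Rightarrow> 'a \<Rightarrow> real" and T :: real
  assumes brownian: "brownian_motion M W" and T_pos: "0 < T"
begin

sublocale prob_space M
  using brownian by (simp add: brownian_motion_def)

lemma W_borel [measurable]: "W t \<in> borel_measurable M"
  using brownian by (simp add: brownian_motion_def)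

lemma W_0: "\<omega> \<in> space M \<Longrightarrow> W 0 \<omega> = 0"
  using brownian by (simp add: brownian_motion_def)

lemma W_continuous: "\<omega> \<in> space M \<Longrightarrow> continuous_on {0..} (\<lambda>t. W t \<omega>)"
  using brownian by (simp add: brownian_motion_def)

lemma W_distributed:
  assumes "0 < t"
  shows "distributed M lborel (\<lambda>\<omega>. W t \<omega> - W 0 \<omega>) (\<lambda>y. ennreal (normal_density 0 (sqrt t) y))"
proof -
  have "\<forall>s t. 0 \<le> s \<and> s < t \<longrightarrow> distributed M lborel (\<lambda>\<omega>. W t \<omega> - W s \<omega>)
      (\<lambda>y. ennreal (normal_density 0 (sqrt (t - s)) y))"
    using brownian by (simp add: brownian_motion_def)
  then show ?thesis
    using assms by (metis diff_zero order_refl)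
qed

lemma W_moment_le:
  assumes "s \<in> {0..T}"
  shows "(\<integral>\<^sup>+\<omega>. ennreal (\<bar>W s \<omega>\<bar> ^ k) \<partial>M) \<le> ennreal (sqrt T ^ k * dfact (k - 1))"
proof (cases "s = 0")
  case True
  then have "(\<integral>\<^sup>+\<omega>. ennreal (\<bar>W s \<omega>\<bar> ^ k) \<partial>M) = ennreal (0 ^ k)"
    by (simp add: W_0 emeasure_space_1 cong: nn_integral_cong)
  also have "\<dots> \<le> ennreal (sqrt T ^ k * dfact (k - 1))"
    using T_pos dfact_ge_1[of "k - 1"] by (cases k) auto
  finally show ?thesis .
next
  case False
  with assms have "0 < s" by simp
  have "(\<integral>\<^sup>+\<omega>. ennreal (\<bar>W s \<omega>\<bar> ^ k) \<partial>M) = (\<integral>\<^sup>+\<omega>. ennreal (\<bar>W s \<omega> - W 0 \<omega>\<bar> ^ k) \<partial>M)"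
    by (intro nn_integral_cong) (simp add: W_0)
  also have "\<dots> \<le> ennreal (sqrt s ^ k * dfact (k - 1))"
    using \<open>0 < s\<close> by (intro nn_integral_abs_power_normal_le W_distributed) auto
  also have "\<dots> \<le> ennreal (sqrt T ^ k * dfact (k - 1))"
    using assms by (intro ennreal_leI mult_right_mono power_mono) auto
  finally show ?thesis .
qed

lemma W_bounded:
  assumes "\<omega> \<in> space M"
  obtains S where "\<And>u. u \<in> {0..T} \<Longrightarrow> \<bar>W u \<omega>\<bar> \<le> S"
proof -
  have "compact ((\<lambda>u. W u \<omega>) ` {0..T})"
    using W_continuous[OF assms] by (intro compact_continuous_image compact_Icc) (auto elim: continuous_on_subset)
  then obtain S where "\<And>y. y \<in> (\<lambda>u. W u \<omega>) ` {0..T} \<Longrightarrow> norm y \<le> S"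
    using compact_imp_bounded bounded_iff by metis
  then show ?thesis
    using that by force
qed

lemma time_integrand_borel:
  fixes g :: "real \<Rightarrow> ennreal"
  assumes [measurable]: "g \<in> borel_measurable borel"
  shows "(\<lambda>(\<omega>, u). g (W u \<omega>) * indicator {0..T} u) \<in> borel_measurable (M \<Otimes>\<^sub>M lborel)"
proof -
  \<comment> \<open>Paths are only continuous on \<open>[0, \<infinity>)\<close>; \<open>max 0\<close> extends them continuously to \<open>\<real>\<close>.\<close>
  have "(\<lambda>(\<omega>, u). W (max 0 u) \<omega>) \<in> borel_measurable (M \<Otimes>\<^sub>M borel)"
  proof (rule borel_measurable_continuous_paths)
    show "continuous_on UNIV (\<lambda>u. W (max 0 u) \<omega>)" if "\<omega> \<in> space M" for \<omega>
      using W_continuous[OF that]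
      by (rule continuous_on_compose2) (auto intro!: continuous_intros)
  qed simp
  then have [measurable]: "(\<lambda>p. W (max 0 (snd p)) (fst p)) \<in> borel_measurable (M \<Otimes>\<^sub>M borel)"
    by (simp add: case_prod_beta)
  have "(\<lambda>(\<omega>, u). g (W (max 0 u) \<omega>) * indicator {0..T} u) \<in> borel_measurable (M \<Otimes>\<^sub>M lborel)"
    by measurable
  then show ?thesis
    by (rule measurable_cong[THEN iffD1, rotated]) (auto simp: indicator_def)
qed

lemma time_integral_borel [measurable]:
  fixes g :: "real \<Rightarrow> ennreal"
  shows "g \<in> borel_measurable borel \<Longrightarrow> (\<lambda>\<omega>. \<integral>\<^sup>+u\<in>{0..T}. g (W u \<omega>) \<partial>lborel) \<in> borel_measurable M"
  using lborel.borel_measurable_nn_integral[OF time_integrand_borel] by simp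

lemma time_integrand_path_borel:
  fixes g :: "real \<Rightarrow> ennreal"
  assumes "g \<in> borel_measurable borel" "\<omega> \<in> space M"
  shows "(\<lambda>u. g (W u \<omega>) * indicator {0..T} u) \<in> borel_measurable lborel"
  using measurable_Pair2[OF time_integrand_borel[OF assms(1)] assms(2)] by simp

lemma nn_integral_time_integral_le:
  fixes g :: "real \<Rightarrow> ennreal"
  assumes "g \<in> borel_measurable borel" "\<And>u. u \<in> {0..T} \<Longrightarrow> (\<integral>\<^sup>+\<omega>. g (W u \<omega>) \<partial>M) \<le> B"
  shows "(\<integral>\<^sup>+\<omega>. (\<integral>\<^sup>+u\<in>{0..T}. g (W u \<omega>) \<partial>lborel) \<partial>M) \<le> ennreal T * B"
proof -
  interpret pair_sigma_finite M lborel
    by unfold_locales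
  have "(\<integral>\<^sup>+\<omega>. (\<integral>\<^sup>+u\<in>{0..T}. g (W u \<omega>) \<partial>lborel) \<partial>M)
      = (\<integral>\<^sup>+u. (\<integral>\<^sup>+\<omega>. g (W u \<omega>) * indicator {0..T} u \<partial>M) \<partial>lborel)"
    using Fubini'[OF time_integrand_borel[OF assms(1)]] by simp
  also have "\<dots> = (\<integral>\<^sup>+u. (\<integral>\<^sup>+\<omega>. g (W u \<omega>) \<partial>M) * indicator {0..T} u \<partial>lborel)"
    using assms(1) by (intro nn_integral_cong nn_integral_multc) simp
  also have "\<dots> \<le> (\<integral>\<^sup>+u. B * indicator {0..T} u \<partial>lborel)"
    using assms(2) by (intro nn_integral_mono) (auto simp: indicator_def)
  also have "\<dots> = ennreal T * B"
    using T_pos by (simp add: nn_integral_cmult_indicator mult.commute)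
  finally show ?thesis .
qed

definition abs_W_integral :: "'a \<Rightarrow> real" where
  "abs_W_integral \<omega> = enn2real (\<integral>\<^sup>+u\<in>{0..T}. ennreal \<bar>W u \<omega>\<bar> \<partial>lborel)"

lemma abs_W_integral_nonneg: "0 \<le> abs_W_integral \<omega>"
  by (simp add: abs_W_integral_def)

lemma abs_W_integral_borel [measurable]: "abs_W_integral \<in> borel_measurable M"
  unfolding abs_W_integral_def[abs_def] by measurable

lemma ennreal_abs_W_integral:
  assumes "\<omega> \<in> space M"
  shows "(\<integral>\<^sup>+u\<in>{0..T}. ennreal \<bar>W u \<omega>\<bar> \<partial>lborel) = ennreal (abs_W_integral \<omega>)"
proof -
  obtain S where S: "\<And>u. u \<in> {0..T} \<Longrightarrow> \<bar>W u \<omega>\<bar> \<le> S"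
    using W_bounded[OF assms] by blast
  have "(\<integral>\<^sup>+u\<in>{0..T}. ennreal \<bar>W u \<omega>\<bar> \<partial>lborel) \<le> (\<integral>\<^sup>+u. ennreal S * indicator {0..T} u \<partial>lborel)"
    using S by (intro nn_integral_mono) (auto simp: indicator_def intro: ennreal_leI)
  also have "\<dots> < \<infinity>"
    using T_pos by (simp add: nn_integral_cmult_indicator ennreal_mult_less_top)
  finally show ?thesis
    by (simp add: abs_W_integral_def)
qed

lemma abs_W_integral_power_le:
  assumes "\<omega> \<in> space M"
  shows "ennreal (T * abs_W_integral \<omega> ^ k)
    \<le> ennreal (T ^ k) * (\<integral>\<^sup>+u\<in>{0..T}. ennreal (\<bar>W u \<omega>\<bar> ^ k) \<partial>lborel)"
proof -
  have "continuous_on UNIV (\<lambda>u. W (max 0 u) \<omega>)"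
    using W_continuous[OF assms] by (rule continuous_on_compose2) (auto intro!: continuous_intros)
  then have cont: "continuous_on UNIV (\<lambda>u. \<bar>W (max 0 u) \<omega>\<bar>)"
    by (rule continuous_on_rabs)
  have max_eq: "(\<integral>\<^sup>+u\<in>{0..T}. ennreal (\<bar>W (max 0 u) \<omega>\<bar> ^ j) \<partial>lborel)
      = (\<integral>\<^sup>+u\<in>{0..T}. ennreal (\<bar>W u \<omega>\<bar> ^ j) \<partial>lborel)" for j
    by (intro nn_integral_cong) (simp add: indicator_def)
  have "ennreal (T * abs_W_integral \<omega> ^ k)
      \<le> ennreal (T ^ k) * (\<integral>\<^sup>+u\<in>{0..T}. ennreal (\<bar>W (max 0 u) \<omega>\<bar> ^ k) \<partial>lborel)"
  proof (rule power_set_nn_integral_le)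
    show "(\<lambda>u. \<bar>W (max 0 u) \<omega>\<bar>) \<in> borel_measurable lborel"
      using borel_measurable_continuous_onI[OF cont] by simp
    show "(\<integral>\<^sup>+u\<in>{0..T}. ennreal \<bar>W (max 0 u) \<omega>\<bar> \<partial>lborel) = ennreal (abs_W_integral \<omega>)"
      using max_eq[of 1] ennreal_abs_W_integral[OF assms] by simp
  qed (use T_pos abs_W_integral_nonneg in auto)
  then show ?thesis
    by (simp only: max_eq)
qed

lemma abs_W_integral_moment_le:
  "(\<integral>\<^sup>+\<omega>. ennreal (abs_W_integral \<omega> ^ k) \<partial>M) \<le> ennreal ((T * sqrt T) ^ k * dfact (k - 1))"
proof -
  have "ennreal T * (\<integral>\<^sup>+\<omega>. ennreal (abs_W_integral \<omega> ^ k) \<partial>M)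
      = (\<integral>\<^sup>+\<omega>. ennreal (T * abs_W_integral \<omega> ^ k) \<partial>M)"
    using T_pos abs_W_integral_nonneg
    by (subst nn_integral_cmult[symmetric]) (auto simp: ennreal_mult intro!: nn_integral_cong)
  also have "\<dots> \<le> (\<integral>\<^sup>+\<omega>. ennreal (T ^ k) * (\<integral>\<^sup>+u\<in>{0..T}. ennreal (\<bar>W u \<omega>\<bar> ^ k) \<partial>lborel) \<partial>M)"
    by (intro nn_integral_mono abs_W_integral_power_le)
  also have "\<dots> = ennreal (T ^ k) * (\<integral>\<^sup>+\<omega>. (\<integral>\<^sup>+u\<in>{0..T}. ennreal (\<bar>W u \<omega>\<bar> ^ k) \<partial>lborel) \<partial>M)"
    using time_integral_borel[of "\<lambda>y. ennreal (\<bar>y\<bar> ^ k)"] by (intro nn_integral_cmult) simp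
  also have "\<dots> \<le> ennreal (T ^ k) * (ennreal T * ennreal (sqrt T ^ k * dfact (k - 1)))"
    using nn_integral_time_integral_le[of "\<lambda>y. ennreal (\<bar>y\<bar> ^ k)", OF _ W_moment_le]
    by (intro mult_left_mono) auto
  also have "\<dots> = ennreal T * ennreal ((T * sqrt T) ^ k * dfact (k - 1))"
    using T_pos by (simp add: ennreal_mult[symmetric] power_mult_distrib mult_ac)
  finally show ?thesis
    using T_pos by (simp add: ennreal_mult_le_mult_iff)
qed

lemma abs_Wtil_le:
  assumes "\<omega> \<in> space M" "0 \<le> s" "s \<le> T"
  shows "\<bar>Wtil c b W s \<omega>\<bar> \<le> \<bar>c\<bar> * \<bar>W s \<omega>\<bar> + \<bar>c\<bar> * \<bar>b\<bar> * exp (\<bar>b\<bar> * T) * abs_W_integral \<omega>"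
proof -
  define E where "E = exp (\<bar>b\<bar> * T)"
  have "ennreal \<bar>LBINT u=0..s. exp (b * (s - u)) * W u \<omega>\<bar>
      \<le> (\<integral>\<^sup>+u\<in>{0<..<s}. ennreal \<bar>exp (b * (s - u)) * W u \<omega>\<bar> \<partial>lborel)"
    by (rule abs_LBINT_le_nn_integral[OF assms(2)])
  also have "\<dots> \<le> (\<integral>\<^sup>+u. ennreal E * (ennreal \<bar>W u \<omega>\<bar> * indicator {0..T} u) \<partial>lborel)"
  proof (intro nn_integral_mono)
    fix u
    have "\<bar>exp (b * (s - u)) * W u \<omega>\<bar> \<le> E * \<bar>W u \<omega>\<bar>" if "0 < u" "u < s"
      unfolding abs_mult E_def using that assms exp_le_exp_abs_mult[of "s - u" T b]
      by (intro mult_right_mono) auto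
    then show "ennreal \<bar>exp (b * (s - u)) * W u \<omega>\<bar> * indicator {0<..<s} u
        \<le> ennreal E * (ennreal \<bar>W u \<omega>\<bar> * indicator {0..T} u)"
      using assms by (auto simp: indicator_def E_def ennreal_mult[symmetric] intro: ennreal_leI)
  qed
  also have "\<dots> = ennreal (E * abs_W_integral \<omega>)"
    using time_integrand_path_borel[of "\<lambda>y. ennreal \<bar>y\<bar>", OF _ assms(1)]
    by (simp add: nn_integral_cmult ennreal_abs_W_integral[OF assms(1)] E_def ennreal_mult abs_W_integral_nonneg)
  finally have "\<bar>LBINT u=0..s. exp (b * (s - u)) * W u \<omega>\<bar> \<le> E * abs_W_integral \<omega>"
    using abs_W_integral_nonneg by (simp add: E_def ennreal_le_iff)
  then have "\<bar>W s \<omega> + b * (LBINT u=0..s. exp (b * (s - u)) * W u \<omega>)\<bar> \<le> \<bar>W s \<omega>\<bar> + \<bar>b\<bar> * (E * abs_W_integral \<omega>)"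
    by (intro order_trans[OF abs_triangle_ineq] add_left_mono) (simp add: abs_mult mult_left_mono)
  then have "\<bar>Wtil c b W s \<omega>\<bar> \<le> \<bar>c\<bar> * (\<bar>W s \<omega>\<bar> + \<bar>b\<bar> * (E * abs_W_integral \<omega>))"
    unfolding Wtil_def abs_mult[of c] by (rule mult_left_mono) simp
  then show ?thesis
    by (simp add: E_def algebra_simps)
qed

lemma abs_Wtil_le_Wtil_star:
  assumes "\<omega> \<in> space M" "0 \<le> s" "s \<le> T"
  shows "\<bar>Wtil c b W s \<omega>\<bar> \<le> Wtil_star c b W T \<omega>"
proof -
  obtain S where S: "\<And>u. u \<in> {0..T} \<Longrightarrow> \<bar>W u \<omega>\<bar> \<le> S"
    using W_bounded[OF assms(1)] by blast
  have "\<bar>Wtil c b W u \<omega>\<bar> \<le> \<bar>c\<bar> * S + \<bar>c\<bar> * \<bar>b\<bar> * exp (\<bar>b\<bar> * T) * abs_W_integral \<omega>" if "u \<in> {0..T}" for u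
  proof -
    have "\<bar>c\<bar> * \<bar>W u \<omega>\<bar> \<le> \<bar>c\<bar> * S"
      using S[OF that] by (rule mult_left_mono) simp
    then show ?thesis
      using abs_Wtil_le[OF assms(1), of u c b] that by simp
  qed
  then have "bdd_above ((\<lambda>u. \<bar>Wtil c b W u \<omega>\<bar>) ` {0..T})"
    by (rule bdd_aboveI2)
  then show ?thesis
    unfolding Wtil_star_def using assms by (intro cSUP_upper) auto
qed

lemma Wtil_star_nonneg: "\<omega> \<in> space M \<Longrightarrow> 0 \<le> Wtil_star c b W T \<omega>"
  using abs_Wtil_le_Wtil_star[of \<omega> 0] T_pos by (meson abs_ge_zero order_trans less_imp_le order_refl)

end

section \<open>The Ornstein--Uhlenbeck process\<close>

locale ou_estimates = brownian_motion_horizon +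
  fixes a b c :: real and q :: "nat \<Rightarrow> real"
  assumes negligible_q: "negligible_df q"
begin

abbreviation ou :: "real \<Rightarrow> real \<Rightarrow> 'a \<Rightarrow> real" where
  "ou x s \<omega> \<equiv> exp (b * s) * x + wdet a b s + Wtil c b W s \<omega>"

definition growth :: real where
  "growth = exp (\<bar>b\<bar> * T)"

definition drift_bound :: real where
  "drift_bound = \<bar>a\<bar> * T * growth"

definition det_bound :: "real \<Rightarrow> real" where
  "det_bound y = ps_abs q (4 * growth * y) + ps_abs q (4 * drift_bound)"

definition noise_bound :: real where
  "noise_bound = ps_abs (\<lambda>k. dfact (k - 1) * q k) (4 * \<bar>c\<bar> * sqrt T)
     + ps_abs (\<lambda>k. dfact (k - 1) * q k) (4 * \<bar>c\<bar> * \<bar>b\<bar> * growth * (T * sqrt T))"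

(* The factor 1 + T lets one series serve both the integral over [0, t] and the value at t. *)
definition majorant :: "nat \<Rightarrow> real" where
  "majorant = ps_rescale (1 + T) (4 * growth) ((1 + T) * ps_abs q (4 * drift_bound)) q"

lemma growth_ge_1: "1 \<le> growth"
  using T_pos by (simp add: growth_def)

lemma drift_bound_nonneg: "0 \<le> drift_bound"
  using T_pos by (simp add: drift_bound_def growth_def)

lemma det_bound_nonneg: "0 \<le> y \<Longrightarrow> 0 \<le> det_bound y"
  unfolding det_bound_def using growth_ge_1 drift_bound_nonneg
  by (intro add_nonneg_nonneg ps_abs_nonneg[OF negligible_q]) auto

lemma noise_bound_nonneg: "0 \<le> noise_bound"
  unfolding noise_bound_def using T_pos growth_ge_1
  by (intro add_nonneg_nonneg ps_abs_dfact_nonneg[OF negligible_q]) auto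

lemma negligible_df_majorant: "negligible_df majorant"
  unfolding majorant_def using T_pos growth_ge_1
  by (intro negligible_df_ps_rescale negligible_q) auto

lemma ps_abs_majorant: "0 \<le> y \<Longrightarrow> ps_abs majorant y = (1 + T) * det_bound y"
  unfolding majorant_def det_bound_def
  using T_pos growth_ge_1 drift_bound_nonneg ps_abs_nonneg[OF negligible_q, of "4 * drift_bound"]
  by (subst ps_abs_ps_rescale[OF negligible_q])
     (auto intro!: ps_abs_nonneg[OF negligible_q] simp: algebra_simps)

lemma abs_ou_le:
  assumes "0 \<le> s" "s \<le> T"
  shows "\<bar>ou x s \<omega>\<bar> \<le> (growth * \<bar>x\<bar> + drift_bound) + \<bar>Wtil c b W s \<omega>\<bar>"
proof -
  have "\<bar>exp (b * s) * x\<bar> \<le> growth * \<bar>x\<bar>"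
    unfolding abs_mult growth_def using exp_le_exp_abs_mult[OF assms, of b]
    by (intro mult_right_mono) auto
  moreover have "\<bar>wdet a b s\<bar> \<le> drift_bound"
    unfolding drift_bound_def growth_def by (rule abs_wdet_le[OF assms])
  ultimately show ?thesis
    by linarith
qed

lemma abs_ps_eval_ou_le:
  assumes "0 \<le> s" "s \<le> T" "\<bar>Wtil c b W s \<omega>\<bar> \<le> y"
  shows "\<bar>ps_eval q (ou x s \<omega>)\<bar> \<le> det_bound \<bar>x\<bar> + ps_abs q (2 * y)"
proof -
  have "0 \<le> y" using assms(3) by linarith
  have "\<bar>ps_eval q (ou x s \<omega>)\<bar> \<le> ps_abs q \<bar>ou x s \<omega>\<bar>"
    by (rule abs_ps_eval_le[OF negligible_q])
  also have "\<dots> \<le> ps_abs q ((growth * \<bar>x\<bar> + drift_bound) + y)"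
    using abs_ou_le[OF assms(1,2), of x \<omega>] assms(3) by (intro ps_abs_mono[OF negligible_q]) auto
  also have "\<dots> \<le> ps_abs q (2 * (growth * \<bar>x\<bar> + drift_bound)) + ps_abs q (2 * y)"
    using growth_ge_1 drift_bound_nonneg \<open>0 \<le> y\<close> by (intro ps_abs_add_le[OF negligible_q]) auto
  also have "ps_abs q (2 * (growth * \<bar>x\<bar> + drift_bound)) \<le> det_bound \<bar>x\<bar>"
    using ps_abs_add_le[OF negligible_q, of "2 * growth * \<bar>x\<bar>" "2 * drift_bound"] growth_ge_1 drift_bound_nonneg
    by (simp add: det_bound_def algebra_simps)
  finally show ?thesis by simp
qed

lemma abs_ps_eval_ou_le_Wtil_star:
  assumes "\<omega> \<in> space M" "0 \<le> s" "s \<le> T"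
  shows "(1 + T) * \<bar>ps_eval q (ou x s \<omega>)\<bar> \<le> ps_abs majorant \<bar>x\<bar> + ps_abs majorant (Wtil_star c b W T \<omega>)"
proof -
  let ?S = "Wtil_star c b W T \<omega>"
  have "0 \<le> ?S"
    using Wtil_star_nonneg[OF assms(1)] .
  have "\<bar>ps_eval q (ou x s \<omega>)\<bar> \<le> det_bound \<bar>x\<bar> + ps_abs q (2 * ?S)"
    by (intro abs_ps_eval_ou_le abs_Wtil_le_Wtil_star assms)
  also have "ps_abs q (2 * ?S) \<le> det_bound ?S"
  proof -
    have "?S \<le> growth * ?S"
      using mult_right_mono[OF growth_ge_1 \<open>0 \<le> ?S\<close>] by simp
    then show ?thesis
      unfolding det_bound_def using \<open>0 \<le> ?S\<close> drift_bound_nonneg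
      by (intro add_increasing2 ps_abs_nonneg[OF negligible_q] ps_abs_mono[OF negligible_q]) auto
  qed
  finally have "(1 + T) * \<bar>ps_eval q (ou x s \<omega>)\<bar> \<le> (1 + T) * (det_bound \<bar>x\<bar> + det_bound ?S)"
    using T_pos by (intro mult_left_mono) auto
  then show ?thesis
    using \<open>0 \<le> ?S\<close> by (simp add: ps_abs_majorant distrib_left)
qed

lemma estimable_ps_eval_ou: "estimable M c b W T (\<lambda>t x \<omega>. ps_eval q (ou x t \<omega>))"
  unfolding estimable_def
proof (intro exI[of _ majorant] conjI negligible_df_majorant ballI allI AE_I2)
  fix t x \<omega> assume "t \<in> {0..T}" "\<omega> \<in> space M"
  then have "1 * \<bar>ps_eval q (ou x t \<omega>)\<bar> \<le> (1 + T) * \<bar>ps_eval q (ou x t \<omega>)\<bar>"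
    using T_pos by (intro mult_right_mono) auto
  also have "\<dots> \<le> ps_abs majorant \<bar>x\<bar> + ps_abs majorant (Wtil_star c b W T \<omega>)"
    using \<open>t \<in> {0..T}\<close> \<open>\<omega> \<in> space M\<close> by (intro abs_ps_eval_ou_le_Wtil_star) auto
  finally show "\<bar>ps_eval q (ou x t \<omega>)\<bar> \<le> ps_abs majorant \<bar>x\<bar> + ps_abs majorant (Wtil_star c b W T \<omega>)"
    by simp
qed

lemma estimable_LBINT_ou: "estimable M c b W T (\<lambda>t x \<omega>. LBINT s=0..t. ps_eval q (ou x s \<omega>))"
  unfolding estimable_def
proof (intro exI[of _ majorant] conjI negligible_df_majorant ballI allI AE_I2)
  fix t x \<omega> assume "t \<in> {0..T}" "\<omega> \<in> space M"
  define B where "B = (ps_abs majorant \<bar>x\<bar> + ps_abs majorant (Wtil_star c b W T \<omega>)) / (1 + T)"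
  have bound: "\<bar>ps_eval q (ou x s \<omega>)\<bar> \<le> B" if "0 < s" "s < t" for s
    using abs_ps_eval_ou_le_Wtil_star[OF \<open>\<omega> \<in> space M\<close>, of s x] that \<open>t \<in> {0..T}\<close> T_pos
    by (simp add: B_def field_simps)
  have "0 \<le> B"
    unfolding B_def using T_pos Wtil_star_nonneg[OF \<open>\<omega> \<in> space M\<close>]
    by (intro divide_nonneg_pos add_nonneg_nonneg ps_abs_nonneg[OF negligible_df_majorant]) auto
  have "\<bar>LBINT s=0..t. ps_eval q (ou x s \<omega>)\<bar> \<le> t * B"
    using \<open>t \<in> {0..T}\<close> \<open>0 \<le> B\<close> bound by (intro abs_LBINT_le) auto
  also have "\<dots> \<le> (1 + T) * B"
    using \<open>t \<in> {0..T}\<close> \<open>0 \<le> B\<close> by (intro mult_right_mono) auto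
  finally show "\<bar>LBINT s=0..t. ps_eval q (ou x s \<omega>)\<bar>
      \<le> ps_abs majorant \<bar>x\<bar> + ps_abs majorant (Wtil_star c b W T \<omega>)"
    using T_pos by (simp add: B_def)
qed

lemma abs_ps_eval_ou_le_W:
  assumes "\<omega> \<in> space M" "0 \<le> s" "s \<le> T"
  shows "\<bar>ps_eval q (ou x s \<omega>)\<bar> \<le> det_bound \<bar>x\<bar>
      + (ps_abs q (4 * \<bar>c\<bar> * \<bar>W s \<omega>\<bar>) + ps_abs q (4 * \<bar>c\<bar> * \<bar>b\<bar> * growth * abs_W_integral \<omega>))"
proof -
  let ?y = "\<bar>c\<bar> * \<bar>W s \<omega>\<bar> + \<bar>c\<bar> * \<bar>b\<bar> * growth * abs_W_integral \<omega>"
  have "\<bar>ps_eval q (ou x s \<omega>)\<bar> \<le> det_bound \<bar>x\<bar> + ps_abs q (2 * ?y)"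
    using abs_Wtil_le[OF assms] by (intro abs_ps_eval_ou_le assms(2,3)) (simp add: growth_def)
  also have "ps_abs q (2 * ?y)
      \<le> ps_abs q (4 * (\<bar>c\<bar> * \<bar>W s \<omega>\<bar>)) + ps_abs q (4 * (\<bar>c\<bar> * \<bar>b\<bar> * growth * abs_W_integral \<omega>))"
    using ps_abs_add_le[OF negligible_q, of "2 * (\<bar>c\<bar> * \<bar>W s \<omega>\<bar>)" "2 * (\<bar>c\<bar> * \<bar>b\<bar> * growth * abs_W_integral \<omega>)"]
      growth_ge_1 abs_W_integral_nonneg[of \<omega>]
    by (simp add: distrib_left)
  finally show ?thesis
    by (simp add: mult.assoc)
qed

lemma nn_integral_ps_abs_W_le:
  assumes "s \<in> {0..T}" "0 \<le> L"
  shows "(\<integral>\<^sup>+\<omega>. ennreal (ps_abs q (L * \<bar>W s \<omega>\<bar>)) \<partial>M)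
    \<le> ennreal (ps_abs (\<lambda>k. dfact (k - 1) * q k) (L * sqrt T))"
proof (rule nn_integral_ps_abs_le[OF negligible_q])
  fix k
  have "(\<integral>\<^sup>+\<omega>. ennreal ((L * \<bar>W s \<omega>\<bar>) ^ k) \<partial>M) = ennreal (L ^ k) * (\<integral>\<^sup>+\<omega>. ennreal (\<bar>W s \<omega>\<bar> ^ k) \<partial>M)"
    using assms(2) by (subst nn_integral_cmult[symmetric]) (auto simp: power_mult_distrib ennreal_mult)
  also have "\<dots> \<le> ennreal (L ^ k) * ennreal (sqrt T ^ k * dfact (k - 1))"
    by (intro mult_left_mono W_moment_le assms(1)) simp
  also have "\<dots> = ennreal ((L * sqrt T) ^ k * dfact (k - 1))"
    using assms T_pos by (subst ennreal_mult[symmetric]) (auto simp: power_mult_distrib mult_ac)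
  finally show "(\<integral>\<^sup>+\<omega>. ennreal ((L * \<bar>W s \<omega>\<bar>) ^ k) \<partial>M) \<le> ennreal ((L * sqrt T) ^ k * dfact (k - 1))" .
qed (use assms T_pos in auto)

lemma nn_integral_ps_abs_W_integral_le:
  assumes "0 \<le> L"
  shows "(\<integral>\<^sup>+\<omega>. ennreal (ps_abs q (L * abs_W_integral \<omega>)) \<partial>M)
    \<le> ennreal (ps_abs (\<lambda>k. dfact (k - 1) * q k) (L * (T * sqrt T)))"
proof (rule nn_integral_ps_abs_le[OF negligible_q])
  fix k
  have "(\<integral>\<^sup>+\<omega>. ennreal ((L * abs_W_integral \<omega>) ^ k) \<partial>M)
      = ennreal (L ^ k) * (\<integral>\<^sup>+\<omega>. ennreal (abs_W_integral \<omega> ^ k) \<partial>M)"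
    using assms abs_W_integral_nonneg
    by (subst nn_integral_cmult[symmetric]) (auto simp: power_mult_distrib ennreal_mult)
  also have "\<dots> \<le> ennreal (L ^ k) * ennreal ((T * sqrt T) ^ k * dfact (k - 1))"
    by (intro mult_left_mono abs_W_integral_moment_le) simp
  also have "\<dots> = ennreal ((L * (T * sqrt T)) ^ k * dfact (k - 1))"
    using assms T_pos by (subst ennreal_mult[symmetric]) (auto simp: power_mult_distrib mult_ac)
  finally show "(\<integral>\<^sup>+\<omega>. ennreal ((L * abs_W_integral \<omega>) ^ k) \<partial>M)
      \<le> ennreal ((L * (T * sqrt T)) ^ k * dfact (k - 1))" .
qed (use assms T_pos abs_W_integral_nonneg in auto)

lemma nn_integral_ps_eval_ou_le:
  assumes "t \<in> {0..T}"
  shows "(\<integral>\<^sup>+\<omega>. ennreal \<bar>ps_eval q (ou x t \<omega>)\<bar> \<partial>M) \<le> ennreal (det_bound \<bar>x\<bar> + noise_bound)"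
proof -
  let ?P1 = "\<lambda>\<omega>. ps_abs q (4 * \<bar>c\<bar> * \<bar>W t \<omega>\<bar>)"
  let ?P2 = "\<lambda>\<omega>. ps_abs q (4 * \<bar>c\<bar> * \<bar>b\<bar> * growth * abs_W_integral \<omega>)"
  have nonneg: "0 \<le> ?P1 \<omega>" "0 \<le> ?P2 \<omega>" for \<omega>
    using growth_ge_1 abs_W_integral_nonneg by (auto intro!: ps_abs_nonneg[OF negligible_q])
  have "(\<integral>\<^sup>+\<omega>. ennreal \<bar>ps_eval q (ou x t \<omega>)\<bar> \<partial>M)
      \<le> (\<integral>\<^sup>+\<omega>. ennreal (det_bound \<bar>x\<bar>) + ennreal (?P1 \<omega>) + ennreal (?P2 \<omega>) \<partial>M)"
    using assms abs_ps_eval_ou_le_W det_bound_nonneg nonneg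
    by (intro nn_integral_mono) (auto simp flip: ennreal_plus intro!: ennreal_leI simp: add.assoc)
  also have "\<dots> = ennreal (det_bound \<bar>x\<bar>) + (\<integral>\<^sup>+\<omega>. ennreal (?P1 \<omega>) \<partial>M) + (\<integral>\<^sup>+\<omega>. ennreal (?P2 \<omega>) \<partial>M)"
    by (simp add: nn_integral_add emeasure_space_1)
  also have "\<dots> \<le> ennreal (det_bound \<bar>x\<bar>) + ennreal (ps_abs (\<lambda>k. dfact (k - 1) * q k) (4 * \<bar>c\<bar> * sqrt T))
      + ennreal (ps_abs (\<lambda>k. dfact (k - 1) * q k) (4 * \<bar>c\<bar> * \<bar>b\<bar> * growth * (T * sqrt T)))"
    using nn_integral_ps_abs_W_le[OF assms, of "4 * \<bar>c\<bar>"] growth_ge_1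
      nn_integral_ps_abs_W_integral_le[of "4 * \<bar>c\<bar> * \<bar>b\<bar> * growth"]
    by (intro add_mono) (auto simp: mult.assoc)
  also have "\<dots> = ennreal (det_bound \<bar>x\<bar> + noise_bound)"
    using det_bound_nonneg[of "\<bar>x\<bar>"] T_pos growth_ge_1
      ps_abs_dfact_nonneg[OF negligible_q, of "4 * \<bar>c\<bar> * sqrt T"]
      ps_abs_dfact_nonneg[OF negligible_q, of "4 * \<bar>c\<bar> * \<bar>b\<bar> * growth * (T * sqrt T)"]
    by (simp add: noise_bound_def add.assoc)
  finally show ?thesis .
qed

lemma ennreal_abs_LBINT_ou_le:
  assumes "\<omega> \<in> space M" "t \<in> {0..T}"
  shows "ennreal \<bar>LBINT s=0..t. ps_eval q (ou x s \<omega>)\<bar>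
    \<le> ennreal (T * (det_bound \<bar>x\<bar> + ps_abs q (4 * \<bar>c\<bar> * \<bar>b\<bar> * growth * abs_W_integral \<omega>)))
      + (\<integral>\<^sup>+s\<in>{0..T}. ennreal (ps_abs q (4 * \<bar>c\<bar> * \<bar>W s \<omega>\<bar>)) \<partial>lborel)"
proof -
  let ?g = "\<lambda>y. ennreal (ps_abs q (4 * \<bar>c\<bar> * \<bar>y\<bar>))"
  let ?D = "det_bound \<bar>x\<bar> + ps_abs q (4 * \<bar>c\<bar> * \<bar>b\<bar> * growth * abs_W_integral \<omega>)"
  have "0 \<le> ?D"
    using det_bound_nonneg[of "\<bar>x\<bar>"] growth_ge_1 abs_W_integral_nonneg[of \<omega>]
    by (intro add_nonneg_nonneg ps_abs_nonneg[OF negligible_q]) auto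
  have "ennreal \<bar>LBINT s=0..t. ps_eval q (ou x s \<omega>)\<bar>
      \<le> (\<integral>\<^sup>+s\<in>{0<..<t}. ennreal \<bar>ps_eval q (ou x s \<omega>)\<bar> \<partial>lborel)"
    using assms by (intro abs_LBINT_le_nn_integral) simp
  also have "\<dots> \<le> (\<integral>\<^sup>+s. ennreal ?D * indicator {0..T} s + ?g (W s \<omega>) * indicator {0..T} s \<partial>lborel)"
  proof (intro nn_integral_mono)
    fix s
    have "ennreal \<bar>ps_eval q (ou x s \<omega>)\<bar> \<le> ennreal ?D + ?g (W s \<omega>)" if "0 \<le> s" "s \<le> T"
    proof -
      have "ennreal \<bar>ps_eval q (ou x s \<omega>)\<bar> \<le> ennreal (?D + ps_abs q (4 * \<bar>c\<bar> * \<bar>W s \<omega>\<bar>))"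
        using abs_ps_eval_ou_le_W[OF assms(1) that, of x] by (intro ennreal_leI) (simp add: add_ac)
      also have "\<dots> = ennreal ?D + ?g (W s \<omega>)"
        using \<open>0 \<le> ?D\<close> by (intro ennreal_plus ps_abs_nonneg[OF negligible_q]) auto
      finally show ?thesis .
    qed
    then show "ennreal \<bar>ps_eval q (ou x s \<omega>)\<bar> * indicator {0<..<t} s
        \<le> ennreal ?D * indicator {0..T} s + ?g (W s \<omega>) * indicator {0..T} s"
      using assms(2) by (auto simp: indicator_def)
  qed
  also have "\<dots> = (\<integral>\<^sup>+s. ennreal ?D * indicator {0..T} s \<partial>lborel) + (\<integral>\<^sup>+s\<in>{0..T}. ?g (W s \<omega>) \<partial>lborel)"
    using time_integrand_path_borel[of ?g, OF _ assms(1)] by (intro nn_integral_add) auto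
  also have "(\<integral>\<^sup>+s. ennreal ?D * indicator {0..T} s \<partial>lborel) = ennreal (T * ?D)"
    using T_pos by (subst nn_integral_cmult_indicator) (simp_all add: ennreal_mult' mult.commute del: ennreal_plus)
  finally show ?thesis .
qed

lemma nn_integral_LBINT_ou_le:
  assumes "t \<in> {0..T}"
  shows "(\<integral>\<^sup>+\<omega>. ennreal \<bar>LBINT s=0..t. ps_eval q (ou x s \<omega>)\<bar> \<partial>M)
    \<le> ennreal (T * (det_bound \<bar>x\<bar> + noise_bound))"
proof -
  let ?g = "\<lambda>y. ennreal (ps_abs q (4 * \<bar>c\<bar> * \<bar>y\<bar>))"
  let ?P = "\<lambda>\<omega>. ps_abs q (4 * \<bar>c\<bar> * \<bar>b\<bar> * growth * abs_W_integral \<omega>)"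
  have [measurable]: "?g \<in> borel_measurable borel"
    by measurable
  have "(\<integral>\<^sup>+\<omega>. ennreal \<bar>LBINT s=0..t. ps_eval q (ou x s \<omega>)\<bar> \<partial>M)
      \<le> (\<integral>\<^sup>+\<omega>. ennreal T * (ennreal (det_bound \<bar>x\<bar>) + ennreal (?P \<omega>))
        + (\<integral>\<^sup>+s\<in>{0..T}. ?g (W s \<omega>) \<partial>lborel) \<partial>M)"
    using ennreal_abs_LBINT_ou_le[OF _ assms, where x=x] T_pos det_bound_nonneg[of "\<bar>x\<bar>"] growth_ge_1
      abs_W_integral_nonneg
    by (intro nn_integral_mono) (simp add: ennreal_mult ps_abs_nonneg[OF negligible_q])
  also have "\<dots> = ennreal T * (ennreal (det_bound \<bar>x\<bar>) + (\<integral>\<^sup>+\<omega>. ennreal (?P \<omega>) \<partial>M))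
      + (\<integral>\<^sup>+\<omega>. (\<integral>\<^sup>+s\<in>{0..T}. ?g (W s \<omega>) \<partial>lborel) \<partial>M)"
    using time_integral_borel[of ?g] by (simp add: nn_integral_add nn_integral_cmult emeasure_space_1)
  also have "\<dots> \<le> ennreal T * (ennreal (det_bound \<bar>x\<bar>)
        + ennreal (ps_abs (\<lambda>k. dfact (k - 1) * q k) (4 * \<bar>c\<bar> * \<bar>b\<bar> * growth * (T * sqrt T))))
      + ennreal T * ennreal (ps_abs (\<lambda>k. dfact (k - 1) * q k) (4 * \<bar>c\<bar> * sqrt T))"
    using nn_integral_ps_abs_W_integral_le[of "4 * \<bar>c\<bar> * \<bar>b\<bar> * growth"] growth_ge_1
      nn_integral_ps_abs_W_le[of _ "4 * \<bar>c\<bar>"]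
    by (intro add_mono mult_left_mono nn_integral_time_integral_le) (auto simp: mult.assoc)
  also have "\<dots> = ennreal (T * (det_bound \<bar>x\<bar> + noise_bound))"
    using det_bound_nonneg[of "\<bar>x\<bar>"] T_pos growth_ge_1
      ps_abs_dfact_nonneg[OF negligible_q, of "4 * \<bar>c\<bar> * sqrt T"]
      ps_abs_dfact_nonneg[OF negligible_q, of "4 * \<bar>c\<bar> * \<bar>b\<bar> * growth * (T * sqrt T)"]
    by (simp add: noise_bound_def ennreal_mult distrib_left add_ac)
  finally show ?thesis .
qed

lemma nn_integral_ps_eval_ou_bounded:
  "\<exists>qt (C::real). negligible_df qt \<and>
     (\<forall>t\<in>{0..T}. \<forall>x.
        (\<integral>\<^sup>+ \<omega>. ennreal \<bar>LBINT s=0..t. ps_eval q (ou x s \<omega>)\<bar> \<partial>M)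
      + (\<integral>\<^sup>+ \<omega>. ennreal \<bar>ps_eval q (ou x t \<omega>)\<bar> \<partial>M)
      \<le> ennreal (ps_abs qt \<bar>x\<bar> + C))"
proof (intro exI[of _ majorant] exI[of _ "(1 + T) * noise_bound"] conjI negligible_df_majorant ballI allI)
  fix t x assume "t \<in> {0..T}"
  have "(\<integral>\<^sup>+ \<omega>. ennreal \<bar>LBINT s=0..t. ps_eval q (ou x s \<omega>)\<bar> \<partial>M)
      + (\<integral>\<^sup>+ \<omega>. ennreal \<bar>ps_eval q (ou x t \<omega>)\<bar> \<partial>M)
      \<le> ennreal (T * (det_bound \<bar>x\<bar> + noise_bound)) + ennreal (det_bound \<bar>x\<bar> + noise_bound)"
    using \<open>t \<in> {0..T}\<close> by (intro add_mono nn_integral_LBINT_ou_le nn_integral_ps_eval_ou_le)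
  also have "\<dots> = ennreal (ps_abs majorant \<bar>x\<bar> + (1 + T) * noise_bound)"
    using T_pos det_bound_nonneg[of "\<bar>x\<bar>"] noise_bound_nonneg
    by (simp add: ps_abs_majorant ennreal_plus[symmetric] algebra_simps del: ennreal_plus)
  finally show "(\<integral>\<^sup>+ \<omega>. ennreal \<bar>LBINT s=0..t. ps_eval q (ou x s \<omega>)\<bar> \<partial>M)
      + (\<integral>\<^sup>+ \<omega>. ennreal \<bar>ps_eval q (ou x t \<omega>)\<bar> \<partial>M)
      \<le> ennreal (ps_abs majorant \<bar>x\<bar> + (1 + T) * noise_bound)" .
qed

end

theorem proposition6p7:
  fixes M :: "'a measure" and W :: "real \<Rightarrow> 'a \<Rightarrow> real"
    and a b c T :: real and q :: "nat \<Rightarrow> real"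
  assumes "brownian_motion M W" and "c \<noteq> 0" and "T > 0"
    and "negligible_df q"
  shows "estimable M c b W T
           (\<lambda>t x \<omega>. LBINT s=0..t. ps_eval q (exp (b * s) * x + wdet a b s + Wtil c b W s \<omega>))
       \<and> estimable M c b W T
           (\<lambda>t x \<omega>. ps_eval q (exp (b * t) * x + wdet a b t + Wtil c b W t \<omega>))
       \<and> (\<exists>qt (C::real). negligible_df qt \<and>
           (\<forall>t\<in>{0..T}. \<forall>x.
              (\<integral>\<^sup>+ \<omega>. ennreal \<bar>LBINT s=0..t. ps_eval q (exp (b * s) * x + wdet a b s + Wtil c b W s \<omega>)\<bar> \<partial>M)
            + (\<integral>\<^sup>+ \<omega>. ennreal \<bar>ps_eval q (exp (b * t) * x + wdet a b t + Wtil c b W t \<omega>)\<bar> \<partial>M)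
            \<le> ennreal (ps_abs qt \<bar>x\<bar> + C)))"
proof -
  interpret ou_estimates M W T a b c q
    using assms by unfold_locales auto
  show ?thesis
    using estimable_LBINT_ou estimable_ps_eval_ou nn_integral_ps_eval_ou_bounded by blast
qed

end
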